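(* Let $G$ be a word-representable graph. Then $l(G \circ K_2) \le 2\,l(G) + \kappa_G$, where $\kappa_G$ is the size of a maximum clique of $G$.
   Context: All graphs are simple and undirected. Letters $x,y$ alternate in a word $w$ if deleting all other letters from $w$ yields $xyxy\ldots$ or $yxyx\ldots$ (of either parity). A word $w$ over $V(G)$ represents $G$ if every vertex occurs in $w$ and for all distinct $x,y$, $xy\in E(G)$ iff $x,y$ alternate in $w$; $G$ is word-representable if such a word exists, and $l(G)$ is the minimum length of a word representing $G$. For a graph $G$ and a rooted graph $H$ (a graph with a distinguished root vertex), the rooted product $G\circ H$ is obtained by taking $|V(G)|$ disjoint copies of $H$, one for each vertex $v$ of $G$, and identifying each vertex $v$ of $G$ with the root of its copy of $H$. Here $K_2$ is rooted at one of its vertices. *)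

theory Defs
  imports Main
begin

definition simple_graph :: "'a set \<Rightarrow> ('a \<Rightarrow> 'a \<Rightarrow> bool) \<Rightarrow> bool" where
  "simple_graph V E \<longleftrightarrow> finite V \<and> (\<forall>x y. E x y \<longrightarrow> E y x) \<and> (\<forall>x. \<not> E x x)
     \<and> (\<forall>x y. E x y \<longrightarrow> x \<in> V \<and> y \<in> V)"

definition alternate :: "'a list \<Rightarrow> 'a \<Rightarrow> 'a \<Rightarrow> bool" where
  "alternate w x y \<longleftrightarrow>
     (let u = filter (\<lambda>z. z = x \<or> z = y) w in
        \<forall>i. Suc i < length u \<longrightarrow> u ! i \<noteq> u ! Suc i)"

definition represents :: "'a set \<Rightarrow> ('a \<Rightarrow> 'a \<Rightarrow> bool) \<Rightarrow> 'a list \<Rightarrow> bool" where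
  "represents V E w \<longleftrightarrow> set w = V \<and>
     (\<forall>x\<in>V. \<forall>y\<in>V. x \<noteq> y \<longrightarrow> (E x y \<longleftrightarrow> alternate w x y))"

definition word_representable :: "'a set \<Rightarrow> ('a \<Rightarrow> 'a \<Rightarrow> bool) \<Rightarrow> bool" where
  "word_representable V E \<longleftrightarrow> (\<exists>w. represents V E w)"

definition wr_length :: "'a set \<Rightarrow> ('a \<Rightarrow> 'a \<Rightarrow> bool) \<Rightarrow> nat" where
  "wr_length V E = (LEAST n. \<exists>w. represents V E w \<and> length w = n)"

definition is_clique :: "'a set \<Rightarrow> ('a \<Rightarrow> 'a \<Rightarrow> bool) \<Rightarrow> 'a set \<Rightarrow> bool" where
  "is_clique V E K \<longleftrightarrow> K \<subseteq> V \<and> (\<forall>x\<in>K. \<forall>y\<in>K. x \<noteq> y \<longrightarrow> E x y)"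

definition clique_number :: "'a set \<Rightarrow> ('a \<Rightarrow> 'a \<Rightarrow> bool) \<Rightarrow> nat" where
  "clique_number V E = Max {card K | K. is_clique V E K}"

text \<open>Rooted product G \<circ> K2 (K2 rooted at one end): vertex v of G is (v, True),
  the pendant vertex of its copy of K2 is (v, False).\<close>
definition rp_K2_vertices :: "'a set \<Rightarrow> ('a \<times> bool) set" where
  "rp_K2_vertices V = V \<times> UNIV"

definition rp_K2_edges :: "'a set \<Rightarrow> ('a \<Rightarrow> 'a \<Rightarrow> bool) \<Rightarrow> ('a \<times> bool) \<Rightarrow> ('a \<times> bool) \<Rightarrow> bool" where
  "rp_K2_edges V E p q \<longleftrightarrow>
     (snd p \<and> snd q \<and> E (fst p) (fst q)) \<or>
     (fst p = fst q \<and> fst p \<in> V \<and> snd p \<noteq> snd q)"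

end

theory Submission
  imports Defs
begin

text \<open>Take a shortest word \<open>w\<close> representing \<open>G\<close> and write \<open>v'\<close> for the pendant vertex
  attached to \<open>v\<close>. Replace the first occurrence of each letter \<open>v\<close> by \<open>v' v v'\<close>, the
  second by \<open>v\<close> and every later one by \<open>v' v\<close>. On \<open>{v, v'}\<close> the new word reads
  \<open>v' v v' v \<dots>\<close>; the two copies of \<open>v'\<close> around the first \<open>v\<close> keep \<open>v'\<close> from
  alternating with anything else; and the letters of \<open>G\<close> keep their relative order.
  The new word has length \<open>2 |w|\<close> plus the number of letters occurring exactly once
  in \<open>w\<close>, and those letters pairwise alternate, so they form a clique.\<close>

lemma alternate_iff_successively:
  "alternate w x y \<longleftrightarrow> successively (\<noteq>) (filter (\<lambda>z. z = x \<or> z = y) w)"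
  unfolding alternate_def Let_def successively_conv_nth by simp

lemma alternate_commute: "alternate w x y \<longleftrightarrow> alternate w y x"
  unfolding alternate_def by (simp add: disj_commute)

lemma alternate_filter:
  assumes "Q x" "Q y"
  shows "alternate (filter Q w) x y \<longleftrightarrow> alternate w x y"
proof -
  have "filter (\<lambda>z. z = x \<or> z = y) (filter Q w) = filter (\<lambda>z. z = x \<or> z = y) w"
    using assms by (auto simp: filter_filter intro: filter_cong)
  then show ?thesis by (simp add: alternate_iff_successively)
qed

lemma alternate_map_inj:
  assumes "inj f"
  shows "alternate (map f w) (f x) (f y) \<longleftrightarrow> alternate w x y"
proof -
  have "filter (\<lambda>z. z = f x \<or> z = f y) (map f w) = map f (filter (\<lambda>z. z = x \<or> z = y) w)"
    using assms by (simp add: filter_map comp_def inj_eq)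
  then show ?thesis
    using assms by (simp add: alternate_iff_successively successively_map inj_eq)
qed

lemma count_list_filter: "P x \<Longrightarrow> count_list (filter P w) x = count_list w x"
  by (induction w) auto

lemma alternate_if_count_list_eq_1:
  assumes "count_list w x = 1" "count_list w y = 1" "x \<noteq> y"
  shows "alternate w x y"
proof -
  let ?u = "filter (\<lambda>z. z = x \<or> z = y) w"
  have x: "count_list ?u x = 1" and y: "count_list ?u y = 1"
    using assms by (simp_all add: count_list_filter)
  have "set ?u \<subseteq> {x, y}"
    by auto
  from sum_count_set[OF this] have "length ?u = count_list ?u x + count_list ?u y"
    using assms(3) by simp
  then obtain a b where ab: "?u = [a, b]"
    using x y by (auto simp: length_Suc_conv numeral_2_eq_2)
  then have "a \<noteq> b"
    using x y assms(3) by (auto split: if_splits)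
  then show ?thesis
    unfolding alternate_iff_successively ab by simp
qed

lemma is_clique_letters_occurring_once:
  assumes "represents V E w"
  shows "is_clique V E {v \<in> set w. count_list w v = 1}"
  using assms alternate_if_count_list_eq_1 by (auto simp: represents_def is_clique_def)

lemma card_le_clique_number:
  assumes "finite V" and "is_clique V E K"
  shows "card K \<le> clique_number V E"
proof -
  have "{card K | K. is_clique V E K} \<subseteq> card ` Pow V"
    by (auto simp: is_clique_def)
  then have "finite {card K | K. is_clique V E K}"
    using assms(1) finite_subset by blast
  then show ?thesis
    unfolding clique_number_def using assms(2) by (auto intro: Max_ge)
qed

lemma wr_length_le: "represents V E w \<Longrightarrow> wr_length V E \<le> length w"
  unfolding wr_length_def by (auto intro: Least_le)

lemma shortest_representing_word:
  assumes "word_representable V E"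
  obtains w where "represents V E w" and "length w = wr_length V E"
proof -
  have "\<exists>n w. represents V E w \<and> length w = n"
    using assms by (auto simp: word_representable_def)
  then have "\<exists>w. represents V E w \<and> length w = wr_length V E"
    unfolding wr_length_def by (rule LeastI_ex)
  then show ?thesis using that by blast
qed

definition pendant_block :: "'a \<Rightarrow> nat \<Rightarrow> ('a \<times> bool) list" where
  "pendant_block v c =
     (if c = 0 then [(v, False), (v, True), (v, False)]
      else if c = 1 then [(v, True)]
      else [(v, False), (v, True)])"

fun pendant_word :: "'a list \<Rightarrow> 'a list \<Rightarrow> ('a \<times> bool) list" where
  "pendant_word seen [] = []"
| "pendant_word seen (x # xs) = pendant_block x (count_list seen x) @ pendant_word (x # seen) xs"

lemma pendant_word_append:
  "pendant_word seen (xs @ ys) = pendant_word seen xs @ pendant_word (rev xs @ seen) ys"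
  by (induction xs arbitrary: seen) auto

lemma filter_snd_pendant_word: "filter snd (pendant_word seen xs) = map (\<lambda>x. (x, True)) xs"
  by (induction xs arbitrary: seen) (auto simp: pendant_block_def)

lemma filter_letter_pendant_word:
  "filter (\<lambda>z. fst z = v) (pendant_word seen xs)
     = concat (map (pendant_block v) [count_list seen v..<count_list seen v + count_list xs v])"
proof (induction xs arbitrary: seen)
  case (Cons x xs)
  then show ?case
    by (cases "x = v") (auto simp: upt_conv_Cons pendant_block_def)
qed simp

lemma length_pendant_blocks:
  "length (concat (map (pendant_block v) [0..<k])) = 2 * k + (if k = 1 then 1 else 0)"
  by (induction k) (auto simp: pendant_block_def)

lemma last_pendant_blocks: "last (concat (map (pendant_block v) [0..<Suc k])) = (v, k \<noteq> 0)"
  by (cases k) (auto simp: pendant_block_def)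

lemma successively_pendant_blocks: "successively (\<noteq>) (concat (map (pendant_block v) [0..<k]))"
proof (induction k)
  case (Suc k)
  show ?case
  proof (cases k)
    case 0
    then show ?thesis by (simp add: pendant_block_def)
  next
    case (Suc j)
    let ?prev = "concat (map (pendant_block v) [0..<Suc j])"
    have "last ?prev \<noteq> hd (pendant_block v (Suc j))"
      unfolding last_pendant_blocks by (simp add: pendant_block_def)
    moreover have "successively (\<noteq>) (pendant_block v (Suc j))"
      by (simp add: pendant_block_def)
    moreover have "concat (map (pendant_block v) [0..<Suc k]) = ?prev @ pendant_block v (Suc j)"
      using \<open>k = Suc j\<close> by simp
    ultimately show ?thesis
      using Suc.IH \<open>k = Suc j\<close> by (simp only: successively_append_iff) blast
  qed
qed simp

lemma pendant_word_first_occurrence: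
  assumes "v \<in> set w"
  obtains A B where "pendant_word [] w = A @ pendant_block v 0 @ B"
proof -
  obtain xs ys where "w = xs @ v # ys" and "v \<notin> set xs"
    using assms split_list_first by metis
  then show ?thesis
    using that[of "pendant_word [] xs" "pendant_word (v # rev xs) ys"]
    by (simp add: pendant_word_append)
qed

lemma set_pendant_word: "set (pendant_word [] w) = set w \<times> UNIV"
proof
  have "set (pendant_word seen xs) \<subseteq> set xs \<times> UNIV" for seen xs
    by (induction xs arbitrary: seen) (auto simp: pendant_block_def)
  then show "set (pendant_word [] w) \<subseteq> set w \<times> UNIV" .
next
  show "set w \<times> UNIV \<subseteq> set (pendant_word [] w)"
  proof clarify
    fix v b assume "v \<in> set w"
    then obtain A B where "pendant_word [] w = A @ pendant_block v 0 @ B"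
      by (rule pendant_word_first_occurrence)
    then show "(v, b) \<in> set (pendant_word [] w)"
      by (cases b) (auto simp: pendant_block_def)
  qed
qed

lemma alternate_pendant_roots:
  "alternate (pendant_word [] w) (x, True) (y, True) \<longleftrightarrow> alternate w x y"
proof -
  have "alternate (pendant_word [] w) (x, True) (y, True)
      \<longleftrightarrow> alternate (filter snd (pendant_word [] w)) (x, True) (y, True)"
    by (simp add: alternate_filter)
  also have "\<dots> \<longleftrightarrow> alternate w x y"
    unfolding filter_snd_pendant_word by (rule alternate_map_inj) (simp add: inj_def)
  finally show ?thesis .
qed

lemma alternate_pendant_leaf_root:
  assumes "v \<in> set w"
  shows "alternate (pendant_word [] w) (v, False) (v, True)"
proof -
  have "filter (\<lambda>z. z = (v, False) \<or> z = (v, True)) (pendant_word [] w)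
      = filter (\<lambda>z. fst z = v) (pendant_word [] w)"
    by (rule filter_cong) auto
  also have "\<dots> = concat (map (pendant_block v) [0..<count_list w v])"
    by (simp add: filter_letter_pendant_word)
  finally show ?thesis
    by (simp add: alternate_iff_successively successively_pendant_blocks)
qed

lemma not_alternate_pendant_leaf:
  assumes "v \<in> set w" and "q \<noteq> (v, False)" and "q \<noteq> (v, True)"
  shows "\<not> alternate (pendant_word [] w) (v, False) q"
proof -
  obtain A B where w: "pendant_word [] w = A @ pendant_block v 0 @ B"
    using assms(1) by (rule pendant_word_first_occurrence)
  have "filter (\<lambda>z. z = (v, False) \<or> z = q) (pendant_block v 0) = [(v, False), (v, False)]"
    using assms(2,3) by (auto simp: pendant_block_def)
  then show ?thesis
    unfolding alternate_iff_successively w by (simp add: successively_append_iff)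
qed

lemma represents_pendant_word:
  assumes "represents V E w"
  shows "represents (rp_K2_vertices V) (rp_K2_edges V E) (pendant_word [] w)"
proof -
  have V: "set w = V"
    and E: "\<And>x y. x \<in> V \<Longrightarrow> y \<in> V \<Longrightarrow> x \<noteq> y \<Longrightarrow> E x y \<longleftrightarrow> alternate w x y"
    using assms by (auto simp: represents_def)
  have leaf: "rp_K2_edges V E (a, False) q \<longleftrightarrow> alternate (pendant_word [] w) (a, False) q"
    if "a \<in> V" "q \<noteq> (a, False)" for a q
  proof (cases "q = (a, True)")
    case True
    then show ?thesis
      using alternate_pendant_leaf_root[of a w] that V by (simp add: rp_K2_edges_def)
  next
    case False
    then have "\<not> rp_K2_edges V E (a, False) q"
      using that(2) by (cases q) (auto simp: rp_K2_edges_def)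
    then show ?thesis
      using not_alternate_pendant_leaf[of a w q] that V False by simp
  qed
  have "rp_K2_edges V E p q \<longleftrightarrow> alternate (pendant_word [] w) p q"
    if "p \<in> V \<times> UNIV" "q \<in> V \<times> UNIV" "p \<noteq> q" for p q
  proof -
    obtain a s b t where p: "p = (a, s)" and q: "q = (b, t)"
      by (cases p, cases q)
    consider "\<not> s" | "\<not> t" | "s" "t" by blast
    then show ?thesis
    proof cases
      case 1
      then show ?thesis using leaf[of a q] that p by auto
    next
      case 2
      then have "rp_K2_edges V E q p \<longleftrightarrow> alternate (pendant_word [] w) q p"
        using leaf[of b p] that q by auto
      then show ?thesis
        using 2 p q by (auto simp: rp_K2_edges_def alternate_commute)
    next
      case 3
      then show ?thesis
        using E[of a b] alternate_pendant_roots[of w a b] that p q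
        by (auto simp: rp_K2_edges_def)
    qed
  qed
  then show ?thesis
    unfolding represents_def rp_K2_vertices_def set_pendant_word V by blast
qed

lemma length_pendant_word:
  "length (pendant_word [] w) = 2 * length w + card {v \<in> set w. count_list w v = 1}"
proof -
  let ?L = "pendant_word [] w"
  let ?cost = "\<lambda>k. 2 * k + (if k = 1 then 1 else 0 :: nat)"
  have "count_list (map fst ?L) v = ?cost (count_list w v)" for v
  proof -
    have "count_list (map fst ?L) v = length (filter (\<lambda>z. fst z = v) ?L)"
      by (simp add: count_list_eq_length_filter filter_map comp_def eq_commute)
    then show ?thesis
      by (simp add: filter_letter_pendant_word length_pendant_blocks)
  qed
  moreover have "length ?L = (\<Sum>v\<in>set w. count_list (map fst ?L) v)"
    using sum_count_set[of "map fst ?L" "set w"] by (simp add: set_pendant_word)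
  ultimately have "length ?L = (\<Sum>v\<in>set w. ?cost (count_list w v))"
    by simp
  also have "\<dots> = 2 * length w + card {v \<in> set w. count_list w v = 1}"
    by (simp add: sum.distrib sum_distrib_left[symmetric] sum_count_set sum.If_cases
        Int_def conj_commute)
  finally show ?thesis .
qed

theorem mainTheorem9:
  fixes V :: "'a set" and E :: "'a \<Rightarrow> 'a \<Rightarrow> bool"
  assumes "simple_graph V E"
    and "word_representable V E"
  shows "wr_length (rp_K2_vertices V) (rp_K2_edges V E)
           \<le> 2 * wr_length V E + clique_number V E"
proof -
  obtain w where w: "represents V E w" and len: "length w = wr_length V E"
    using assms(2) by (rule shortest_representing_word)
  have "finite V"
    using w by (auto simp: represents_def)
  then have "card {v \<in> set w. count_list w v = 1} \<le> clique_number V E"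
    using w by (intro card_le_clique_number is_clique_letters_occurring_once)
  moreover have "wr_length (rp_K2_vertices V) (rp_K2_edges V E) \<le> length (pendant_word [] w)"
    using w by (intro wr_length_le represents_pendant_word)
  ultimately show ?thesis
    by (simp add: length_pendant_word len)
qed

end
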